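(* For every finite set of formulas $T$ and formula $\phi$ of $\mathsf{JRC}$: if $T\vdash_{\mathsf{JRC}}\phi$ (there is a closed tableau for $\phi$ from $T$), then $T\models_{\mathsf{JRC}}\phi$.
   Context: Language of $\mathsf{JRC}$: countable sets $\mathsf{Var}$ (justification variables) and $\mathsf{Prop}$ (atoms). Terms $t ::= x \mid t+t$ ($x\in\mathsf{Var}$); formulas $\phi ::= p \mid {\sim}\phi \mid \phi\wedge\phi \mid \phi\to\phi \mid \phi\rightsquigarrow\phi \mid t{:}\phi$. A Routley relational model is $\mathcal M=(W,W_N,R,R_{Fm},R_{Tm},{*},\mathcal V)$ where $W$ is nonempty, $W_N\subseteq W$ nonempty (normal states); $R\subseteq W\times W\times W$ satisfies: for $w\in W_N$, $Rwvu$ iff $v=u$; $R_{Fm}$ assigns to each formula $\phi$ a relation $R_\phi\subseteq W\times W$; $R_{Tm}$ assigns to each term $t$ a relation $R_t\subseteq W\times W$; ${*}:W\to W$ with $w^{**}=w$; $\mathcal V:\mathsf{Prop}\to\mathcal P(W)$. Truth at every $w\in W$: $p$ iff $w\in\mathcal V(p)$; ${\sim}\phi$ iff $w^*\not\models\phi$; $\phi\wedge\psi$ iff both; $\phi\to\psi$ iff for all $v,u$ with $Rwvu$, $v\models\phi$ implies $u\models\psi$; $\phi\rightsquigarrow\psi$ iff $R_\phi(w)\subseteq[\psi]$; $t{:}\phi$ iff $R_t(w)\subseteq[\phi]$; $[\phi]=\{w\in W:w\models\phi\}$. A $\mathsf{JRC}$-model is a Routley relational model with: (1) $R_\phi(w)\subseteq[\phi]$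 for all $w\in W_N$ and all $\phi$; (2) for all $w\in W$, if $w\in[\phi]$ then $w\in R_\phi(w)$; (3) $R_{s+t}\subseteq R_s\cap R_t$. $T\models_{\mathsf{JRC}}\phi$ iff for every $\mathsf{JRC}$-model and every $w\in W_N$, if all members of $T$ are true at $w$ then $\phi$ is true at $w$. Tableaux: labels are elements of $\{0,1,2,\dots\}\cup\{0^\sharp,1^\sharp,2^\sharp,\dots\}$, with $\bar i=i^\sharp$ and $\overline{i^\sharp}=i$. Nodes have the forms $\phi,+x$; $\phi,-x$; $x\rhd_\phi y$; $x\rhd_t y$; $rxyz$. Rules (applied to a branch; $x,y,z$ arbitrary labels; $j,k$ natural numbers): (T$\sim$) from ${\sim}\phi,+x$ add $\phi,-\bar x$; (F$\sim$) from ${\sim}\phi,-x$ add $\phi,+\bar x$; (T$\wedge$) from $\phi\wedge\psi,+x$ add $\phi,+x$ and $\psi,+x$; (F$\wedge$) from $\phi\wedge\psi,-x$ split into $\phi,-x$ | $\psi,-x$; (T$\to$) from $\phi\to\psi,+x$ and $rxyz$ split into $\phi,-y$ | $\psi,+z$; (F$\to$) from $\phi\to\psi,-x$ add $rxjk$, $\phi,+j$, $\psi,-k$ with $j,k$ new, and $j=k$ if $x=0$; (T$\rightsquigarrow$) from $\phi\rightsquigarrow\psi,+x$ and $x\rhd_\phi y$ add $\psi,+y$; (F$\rightsquigarrow$) for $x\neq0$, from $\phi\rightsquigarrow\psi,-x$ add $x\rhd_\phi j$ and $\psi,-j$, $j$ new; (F$\rightsquigarrow_0$) from $\phi\rightsquigarrow\psi,-0$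 add $0\rhd_\phi j$, $\phi,+j$, $\psi,-j$, $j$ new; (Cut$_r$) if $\phi$ occurs on the branch as the antecedent of a $\rightsquigarrow$-formula and $x$ occurs on the branch, split into $\phi,-x$ | ($\phi,+x$ and $x\rhd_\phi x$); (T:) from $t{:}\phi,+x$ and $x\rhd_t y$ add $\phi,+y$; (F:) from $t{:}\phi,-x$ add $x\rhd_t j$ and $\phi,-j$, $j$ new; ($\rhd_+$) from $x\rhd_{s+t}y$ add $x\rhd_s y$ and $x\rhd_t y$; (Normality) for any $x$ occurring on the branch add $r0xx$. A branch is closed if it contains $\phi,+x$ and $\phi,-x$ for some $\phi,x$; a tableau is closed if all its branches are. $T\vdash_{\mathsf{JRC}}\phi$ iff there is a closed tableau whose initial single branch consists of $\psi,+0$ for each $\psi\in T$ and $\phi,-0$. *)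

theory Defs
  imports Main
begin

datatype tm = TVar nat | TPlus tm tm

datatype fm =
    Atom nat
  | FNeg fm
  | FConj fm fm
  | FImp fm fm
  | FCond fm fm
  | FJust tm fm

record 'w rmodel =
  W    :: "'w set"
  WN   :: "'w set"
  R    :: "'w \<Rightarrow> 'w \<Rightarrow> 'w \<Rightarrow> bool"
  RFm  :: "fm \<Rightarrow> 'w \<Rightarrow> 'w \<Rightarrow> bool"
  RTm  :: "tm \<Rightarrow> 'w \<Rightarrow> 'w \<Rightarrow> bool"
  star :: "'w \<Rightarrow> 'w"
  V    :: "nat \<Rightarrow> 'w set"

definition routley_model :: "'w rmodel \<Rightarrow> bool" where
  "routley_model M \<longleftrightarrow>
     W M \<noteq> {} \<and> WN M \<subseteq> W M \<and> WN M \<noteq> {} \<and>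
     (\<forall>w v u. R M w v u \<longrightarrow> w \<in> W M \<and> v \<in> W M \<and> u \<in> W M) \<and>
     (\<forall>w\<in>WN M. \<forall>v\<in>W M. \<forall>u\<in>W M. R M w v u \<longleftrightarrow> v = u) \<and>
     (\<forall>\<phi> w v. RFm M \<phi> w v \<longrightarrow> w \<in> W M \<and> v \<in> W M) \<and>
     (\<forall>t w v. RTm M t w v \<longrightarrow> w \<in> W M \<and> v \<in> W M) \<and>
     (\<forall>w\<in>W M. star M w \<in> W M \<and> star M (star M w) = w) \<and>
     (\<forall>p. V M p \<subseteq> W M)"

fun sat :: "'w rmodel \<Rightarrow> 'w \<Rightarrow> fm \<Rightarrow> bool" where
  "sat M w (Atom p) \<longleftrightarrow> w \<in> V M p"
| "sat M w (FNeg \<phi>) \<longleftrightarrow> \<not> sat M (star M w) \<phi>"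
| "sat M w (FConj \<phi> \<psi>) \<longleftrightarrow> sat M w \<phi> \<and> sat M w \<psi>"
| "sat M w (FImp \<phi> \<psi>) \<longleftrightarrow> (\<forall>v u. R M w v u \<longrightarrow> sat M v \<phi> \<longrightarrow> sat M u \<psi>)"
| "sat M w (FCond \<phi> \<psi>) \<longleftrightarrow> (\<forall>v. RFm M \<phi> w v \<longrightarrow> v \<in> W M \<and> sat M v \<psi>)"
| "sat M w (FJust t \<phi>) \<longleftrightarrow> (\<forall>v. RTm M t w v \<longrightarrow> v \<in> W M \<and> sat M v \<phi>)"

definition truth_set :: "'w rmodel \<Rightarrow> fm \<Rightarrow> 'w set" where
  "truth_set M \<phi> = {w \<in> W M. sat M w \<phi>}"

definition jrc_model :: "'w rmodel \<Rightarrow> bool" where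
  "jrc_model M \<longleftrightarrow> routley_model M \<and>
     (\<forall>w\<in>WN M. \<forall>\<phi>. {v. RFm M \<phi> w v} \<subseteq> truth_set M \<phi>) \<and>
     (\<forall>w\<in>W M. \<forall>\<phi>. w \<in> truth_set M \<phi> \<longrightarrow> RFm M \<phi> w w) \<and>
     (\<forall>s t w v. RTm M (TPlus s t) w v \<longrightarrow> RTm M s w v \<and> RTm M t w v)"

text \<open>Semantic consequence over models whose states live in type 'w
(the theorem is stated for an arbitrary type 'w, hence for all models).\<close>
definition jrc_entails :: "'w itself \<Rightarrow> fm set \<Rightarrow> fm \<Rightarrow> bool" where
  "jrc_entails (_ :: 'w itself) T \<phi> \<longleftrightarrow>
     (\<forall>M :: 'w rmodel. jrc_model M \<longrightarrow>
        (\<forall>w\<in>WN M. (\<forall>\<psi>\<in>T. sat M w \<psi>) \<longrightarrow> sat M w \<phi>))"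

datatype lbl = L nat | Ls nat   (* i and i^\<sharp> *)

fun bar :: "lbl \<Rightarrow> lbl" where
  "bar (L i) = Ls i"
| "bar (Ls i) = L i"

datatype node =
    SPos fm lbl
  | SNeg fm lbl
  | RelFm lbl fm lbl
  | RelTm lbl tm lbl
  | RelR lbl lbl lbl

fun node_labels :: "node \<Rightarrow> lbl set" where
  "node_labels (SPos _ x) = {x}"
| "node_labels (SNeg _ x) = {x}"
| "node_labels (RelFm x _ y) = {x, y}"
| "node_labels (RelTm x _ y) = {x, y}"
| "node_labels (RelR x y z) = {x, y, z}"

definition branch_labels :: "node set \<Rightarrow> lbl set" where
  "branch_labels B = (\<Union>n\<in>B. node_labels n)"

definition fresh :: "nat \<Rightarrow> node set \<Rightarrow> bool" where
  "fresh j B \<longleftrightarrow> L j \<notin> branch_labels B \<and> Ls j \<notin> branch_labels B"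

fun subfms :: "fm \<Rightarrow> fm set" where
  "subfms (Atom p) = {Atom p}"
| "subfms (FNeg \<phi>) = insert (FNeg \<phi>) (subfms \<phi>)"
| "subfms (FConj \<phi> \<psi>) = insert (FConj \<phi> \<psi>) (subfms \<phi> \<union> subfms \<psi>)"
| "subfms (FImp \<phi> \<psi>) = insert (FImp \<phi> \<psi>) (subfms \<phi> \<union> subfms \<psi>)"
| "subfms (FCond \<phi> \<psi>) = insert (FCond \<phi> \<psi>) (subfms \<phi> \<union> subfms \<psi>)"
| "subfms (FJust t \<phi>) = insert (FJust t \<phi>) (subfms \<phi>)"

definition branch_fms :: "node set \<Rightarrow> fm set" where
  "branch_fms B = (\<Union>n\<in>B. case n of SPos \<phi> _ \<Rightarrow> subfms \<phi> | SNeg \<phi> _ \<Rightarrow> subfms \<phi> | _ \<Rightarrow> {})"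

text \<open>tab_rule B Es: a rule is applicable to branch B, and it extends B
into the branches B \<union> E for E in Es (one for each fork).\<close>
inductive tab_rule :: "node set \<Rightarrow> node set list \<Rightarrow> bool" where
  T_neg: "SPos (FNeg \<phi>) x \<in> B \<Longrightarrow> tab_rule B [{SNeg \<phi> (bar x)}]"
| F_neg: "SNeg (FNeg \<phi>) x \<in> B \<Longrightarrow> tab_rule B [{SPos \<phi> (bar x)}]"
| T_conj: "SPos (FConj \<phi> \<psi>) x \<in> B \<Longrightarrow> tab_rule B [{SPos \<phi> x, SPos \<psi> x}]"
| F_conj: "SNeg (FConj \<phi> \<psi>) x \<in> B \<Longrightarrow> tab_rule B [{SNeg \<phi> x}, {SNeg \<psi> x}]"
| T_imp: "SPos (FImp \<phi> \<psi>) x \<in> B \<Longrightarrow> RelR x y z \<in> B \<Longrightarrow>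
            tab_rule B [{SNeg \<phi> y}, {SPos \<psi> z}]"
| F_imp: "SNeg (FImp \<phi> \<psi>) x \<in> B \<Longrightarrow> fresh j B \<Longrightarrow> fresh k B \<Longrightarrow>
            (x = L 0 \<longrightarrow> j = k) \<Longrightarrow> (x \<noteq> L 0 \<longrightarrow> j \<noteq> k) \<Longrightarrow>
            tab_rule B [{RelR x (L j) (L k), SPos \<phi> (L j), SNeg \<psi> (L k)}]"
| T_cond: "SPos (FCond \<phi> \<psi>) x \<in> B \<Longrightarrow> RelFm x \<phi> y \<in> B \<Longrightarrow>
            tab_rule B [{SPos \<psi> y}]"
| F_cond: "x \<noteq> L 0 \<Longrightarrow> SNeg (FCond \<phi> \<psi>) x \<in> B \<Longrightarrow> fresh j B \<Longrightarrow>
            tab_rule B [{RelFm x \<phi> (L j), SNeg \<psi> (L j)}]"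
| F_cond0: "SNeg (FCond \<phi> \<psi>) (L 0) \<in> B \<Longrightarrow> fresh j B \<Longrightarrow>
            tab_rule B [{RelFm (L 0) \<phi> (L j), SPos \<phi> (L j), SNeg \<psi> (L j)}]"
| Cut_r: "FCond \<phi> \<chi> \<in> branch_fms B \<Longrightarrow> x \<in> branch_labels B \<Longrightarrow>
            tab_rule B [{SNeg \<phi> x}, {SPos \<phi> x, RelFm x \<phi> x}]"
| T_just: "SPos (FJust t \<phi>) x \<in> B \<Longrightarrow> RelTm x t y \<in> B \<Longrightarrow>
            tab_rule B [{SPos \<phi> y}]"
| F_just: "SNeg (FJust t \<phi>) x \<in> B \<Longrightarrow> fresh j B \<Longrightarrow>
            tab_rule B [{RelTm x t (L j), SNeg \<phi> (L j)}]"
| Rel_plus: "RelTm x (TPlus s t) y \<in> B \<Longrightarrow> tab_rule B [{RelTm x s y, RelTm x t y}]"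
| Normality: "x \<in> branch_labels B \<Longrightarrow> tab_rule B [{RelR (L 0) x x}]"

definition closed_branch :: "node set \<Rightarrow> bool" where
  "closed_branch B \<longleftrightarrow> (\<exists>\<phi> x. SPos \<phi> x \<in> B \<and> SNeg \<phi> x \<in> B)"

text \<open>closable B: there is a closed tableau extending the single branch B,
i.e. B can be developed by finitely many rule applications so that every
resulting branch is closed.\<close>
inductive closable :: "node set \<Rightarrow> bool" where
  cl_closed: "closed_branch B \<Longrightarrow> closable B"
| cl_rule: "tab_rule B Es \<Longrightarrow> (\<forall>E\<in>set Es. closable (B \<union> E)) \<Longrightarrow> closable B"

definition jrc_derivable :: "fm set \<Rightarrow> fm \<Rightarrow> bool" where
  "jrc_derivable T \<phi> \<longleftrightarrow>
     closable ((\<lambda>\<psi>. SPos \<psi> (L 0)) ` T \<union> {SNeg \<phi> (L 0)})"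

end

theory Submission
  imports Defs
begin

text \<open>Soundness is the usual preservation argument. An assignment f of states to the natural
numbers interprets the label i as f i and i\<sharp> as the star of f i; a branch is faithful to a model if
some such assignment, sending 0 to a normal state, makes every node on the branch true. Each
tableau rule turns a faithful branch into at least one faithful child: the branching rules
follow the truth conditions, and a rule introducing a new label j is matched by re-assigning j
to the witness state that the falsity of the principal formula provides. A closed branch is
never faithful, and a countermodel to T \<turnstile> \<phi> makes the initial branch faithful by sending
every label to the refuting normal state, so no closed tableau for it exists.\<close>

lemma routley_model_normal_in_W: "routley_model M \<Longrightarrow> w \<in> WN M \<Longrightarrow> w \<in> W M"
  unfolding routley_model_def by blast

lemma routley_model_star_in_W: "routley_model M \<Longrightarrow> w \<in> W M \<Longrightarrow> star M w \<in> W M"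
  unfolding routley_model_def by blast

lemma routley_model_star_star: "routley_model M \<Longrightarrow> w \<in> W M \<Longrightarrow> star M (star M w) = w"
  unfolding routley_model_def by blast

lemma routley_model_R_in_W: "routley_model M \<Longrightarrow> R M w v u \<Longrightarrow> v \<in> W M \<and> u \<in> W M"
  unfolding routley_model_def by blast

lemma routley_model_normal_R_iff:
  "routley_model M \<Longrightarrow> w \<in> WN M \<Longrightarrow> v \<in> W M \<Longrightarrow> u \<in> W M \<Longrightarrow> R M w v u \<longleftrightarrow> v = u"
  unfolding routley_model_def by blast

lemma routley_model_RFm_in_W: "routley_model M \<Longrightarrow> RFm M \<phi> w v \<Longrightarrow> v \<in> W M"
  unfolding routley_model_def by blast

lemma routley_model_RTm_in_W: "routley_model M \<Longrightarrow> RTm M t w v \<Longrightarrow> v \<in> W M"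
  unfolding routley_model_def by blast

fun label_state :: "'w rmodel \<Rightarrow> (nat \<Rightarrow> 'w) \<Rightarrow> lbl \<Rightarrow> 'w" where
  "label_state M f (L i) = f i"
| "label_state M f (Ls i) = star M (f i)"

fun holds :: "'w rmodel \<Rightarrow> (nat \<Rightarrow> 'w) \<Rightarrow> node \<Rightarrow> bool" where
  "holds M f (SPos \<phi> x) \<longleftrightarrow> sat M (label_state M f x) \<phi>"
| "holds M f (SNeg \<phi> x) \<longleftrightarrow> \<not> sat M (label_state M f x) \<phi>"
| "holds M f (RelFm x \<phi> y) \<longleftrightarrow> RFm M \<phi> (label_state M f x) (label_state M f y)"
| "holds M f (RelTm x t y) \<longleftrightarrow> RTm M t (label_state M f x) (label_state M f y)"
| "holds M f (RelR x y z) \<longleftrightarrow> R M (label_state M f x) (label_state M f y) (label_state M f z)"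

definition faithful :: "'w rmodel \<Rightarrow> (nat \<Rightarrow> 'w) \<Rightarrow> node set \<Rightarrow> bool" where
  "faithful M f B \<longleftrightarrow> (\<forall>i. f i \<in> W M) \<and> f 0 \<in> WN M \<and> L 0 \<in> branch_labels B \<and>
     (\<forall>n\<in>B. holds M f n)"

lemma label_state_in_W: "routley_model M \<Longrightarrow> \<forall>i. f i \<in> W M \<Longrightarrow> label_state M f x \<in> W M"
  by (cases x) (simp_all add: routley_model_star_in_W)

lemma label_state_bar:
  assumes "routley_model M" "\<forall>i. f i \<in> W M"
  shows "label_state M f (bar x) = star M (label_state M f x)"
  using assms by (cases x) (simp_all add: routley_model_star_star)

lemma label_state_fun_upd_fresh:
  "fresh j B \<Longrightarrow> x \<in> branch_labels B \<Longrightarrow> label_state M (f(j := v)) x = label_state M f x"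
  by (cases x) (auto simp: fresh_def)

lemma node_labels_subset_branch_labels: "n \<in> B \<Longrightarrow> node_labels n \<subseteq> branch_labels B"
  by (auto simp: branch_labels_def)

lemma holds_fun_upd_fresh:
  assumes "fresh j B" "n \<in> B"
  shows "holds M (f(j := v)) n \<longleftrightarrow> holds M f n"
  using node_labels_subset_branch_labels[OF assms(2)]
  by (cases n) (simp_all add: label_state_fun_upd_fresh[OF assms(1)])

lemma faithful_fun_upd_fresh:
  assumes "faithful M f B" "fresh j B" "v \<in> W M"
  shows "faithful M (f(j := v)) B"
proof -
  have "j \<noteq> 0"
    using assms(1,2) by (metis faithful_def fresh_def)
  then show ?thesis
    using assms by (auto simp: faithful_def holds_fun_upd_fresh[OF assms(2)])
qed

lemma faithful_UnI: "faithful M f B \<Longrightarrow> \<forall>n\<in>E. holds M f n \<Longrightarrow> faithful M f (B \<union> E)"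
  by (auto simp: faithful_def branch_labels_def)

lemma faithful_extend_one:
  "faithful M f B \<Longrightarrow> \<forall>n\<in>E. holds M f n \<Longrightarrow> \<exists>E'\<in>set [E]. \<exists>g. faithful M g (B \<union> E')"
  by (auto dest: faithful_UnI)

lemma faithful_extend_two:
  assumes "faithful M f B" "(\<forall>n\<in>E\<^sub>1. holds M f n) \<or> (\<forall>n\<in>E\<^sub>2. holds M f n)"
  shows "\<exists>E\<in>set [E\<^sub>1, E\<^sub>2]. \<exists>g. faithful M g (B \<union> E)"
  using assms(2) faithful_UnI[OF assms(1)] by auto

lemma faithful_holds: "faithful M f B \<Longrightarrow> n \<in> B \<Longrightarrow> holds M f n"
  by (simp add: faithful_def)

lemma faithful_label_state_in_W:
  "routley_model M \<Longrightarrow> faithful M f B \<Longrightarrow> label_state M f x \<in> W M"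
  by (simp add: faithful_def label_state_in_W)

lemma faithful_extend_fresh:
  assumes "faithful M f B" "fresh j B" "v \<in> W M" "\<forall>n\<in>E. holds M (f(j := v)) n"
  shows "faithful M (f(j := v)) (B \<union> E)"
  using faithful_UnI[OF faithful_fun_upd_fresh[OF assms(1-3)] assms(4)] .

lemma jrc_model_routley_model: "jrc_model M \<Longrightarrow> routley_model M"
  by (simp add: jrc_model_def)

lemma jrc_model_normal_RFm_sat: "jrc_model M \<Longrightarrow> w \<in> WN M \<Longrightarrow> RFm M \<phi> w v \<Longrightarrow> sat M v \<phi>"
  unfolding jrc_model_def truth_set_def by blast

lemma jrc_model_sat_RFm_refl: "jrc_model M \<Longrightarrow> w \<in> W M \<Longrightarrow> sat M w \<phi> \<Longrightarrow> RFm M \<phi> w w"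
  unfolding jrc_model_def truth_set_def by blast

lemma jrc_model_RTm_TPlus:
  "jrc_model M \<Longrightarrow> RTm M (TPlus s t) w v \<Longrightarrow> RTm M s w v \<and> RTm M t w v"
  unfolding jrc_model_def by blast

lemma F_imp_sound:
  assumes M: "jrc_model M" and f: "faithful M f B" and x: "SNeg (FImp \<phi> \<psi>) x \<in> B"
    and j: "fresh j B" and k: "fresh k B"
    and "x = L 0 \<longrightarrow> j = k" and "x \<noteq> L 0 \<longrightarrow> j \<noteq> k"
  shows "\<exists>g. faithful M g (B \<union> {RelR x (L j) (L k), SPos \<phi> (L j), SNeg \<psi> (L k)})"
proof -
  have rm: "routley_model M" using M by (rule jrc_model_routley_model)
  obtain v u where vu: "R M (label_state M f x) v u" "sat M v \<phi>" "\<not> sat M u \<psi>"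
    using faithful_holds[OF f x] by auto
  have "v \<in> W M" "u \<in> W M" using routley_model_R_in_W[OF rm vu(1)] by auto
  have x_in: "x \<in> branch_labels B"
    using node_labels_subset_branch_labels[OF x] by simp
  show ?thesis
  proof (cases "x = L 0")
    case True
    \<comment> \<open>at the normal state f 0 the relation R is the diagonal, which is why the rule reuses one label\<close>
    then have "v = u" "j = k"
      using f vu(1) \<open>v \<in> W M\<close> \<open>u \<in> W M\<close> routley_model_normal_R_iff[OF rm] assms(6)
      by (auto simp: faithful_def)
    moreover have "label_state M (f(j := v)) x = label_state M f x"
      using label_state_fun_upd_fresh[OF j x_in] .
    ultimately have "faithful M (f(j := v)) (B \<union> {RelR x (L j) (L k), SPos \<phi> (L j), SNeg \<psi> (L k)})"
      using vu by (intro faithful_extend_fresh[OF f j \<open>v \<in> W M\<close>]) simp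
    then show ?thesis by blast
  next
    case False
    then have "j \<noteq> k" using assms(7) by blast
    let ?g = "f(j := v, k := u)"
    have "faithful M ?g B"
      using faithful_fun_upd_fresh[OF faithful_fun_upd_fresh[OF f j \<open>v \<in> W M\<close>] k \<open>u \<in> W M\<close>] .
    moreover have "label_state M ?g x = label_state M f x"
      by (simp add: label_state_fun_upd_fresh[OF j x_in] label_state_fun_upd_fresh[OF k x_in])
    ultimately have "faithful M ?g (B \<union> {RelR x (L j) (L k), SPos \<phi> (L j), SNeg \<psi> (L k)})"
      using vu \<open>j \<noteq> k\<close> by (intro faithful_UnI) simp_all
    then show ?thesis by blast
  qed
qed

lemma F_cond_sound:
  assumes M: "jrc_model M" and f: "faithful M f B" and x: "SNeg (FCond \<phi> \<psi>) x \<in> B"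
    and j: "fresh j B"
  shows "\<exists>g. faithful M g (B \<union> {RelFm x \<phi> (L j), SNeg \<psi> (L j)})"
    and "x = L 0 \<Longrightarrow> \<exists>g. faithful M g (B \<union> {RelFm x \<phi> (L j), SPos \<phi> (L j), SNeg \<psi> (L j)})"
proof -
  have rm: "routley_model M" using M by (rule jrc_model_routley_model)
  obtain v where v: "RFm M \<phi> (label_state M f x) v" "\<not> sat M v \<psi>"
    using faithful_holds[OF f x] routley_model_RFm_in_W[OF rm] by fastforce
  have "v \<in> W M" using routley_model_RFm_in_W[OF rm v(1)] .
  have "label_state M (f(j := v)) x = label_state M f x"
    using node_labels_subset_branch_labels[OF x] label_state_fun_upd_fresh[OF j] by simp
  then have new: "holds M (f(j := v)) (RelFm x \<phi> (L j))" "holds M (f(j := v)) (SNeg \<psi> (L j))"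
    using v by simp_all
  have "faithful M (f(j := v)) (B \<union> {RelFm x \<phi> (L j), SNeg \<psi> (L j)})"
    using new by (intro faithful_extend_fresh[OF f j \<open>v \<in> W M\<close>]) simp
  then show "\<exists>g. faithful M g (B \<union> {RelFm x \<phi> (L j), SNeg \<psi> (L j)})" by blast
  assume "x = L 0"
  then have "label_state M f x \<in> WN M"
    using f by (simp add: faithful_def)
  then have "holds M (f(j := v)) (SPos \<phi> (L j))"
    using jrc_model_normal_RFm_sat[OF M _ v(1)] by simp
  then have "faithful M (f(j := v)) (B \<union> {RelFm x \<phi> (L j), SPos \<phi> (L j), SNeg \<psi> (L j)})"
    using new by (intro faithful_extend_fresh[OF f j \<open>v \<in> W M\<close>]) simp
  then show "\<exists>g. faithful M g (B \<union> {RelFm x \<phi> (L j), SPos \<phi> (L j), SNeg \<psi> (L j)})" by blast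
qed

lemma F_just_sound:
  assumes M: "jrc_model M" and f: "faithful M f B" and x: "SNeg (FJust t \<phi>) x \<in> B"
    and j: "fresh j B"
  shows "\<exists>g. faithful M g (B \<union> {RelTm x t (L j), SNeg \<phi> (L j)})"
proof -
  have rm: "routley_model M" using M by (rule jrc_model_routley_model)
  obtain v where v: "RTm M t (label_state M f x) v" "\<not> sat M v \<phi>"
    using faithful_holds[OF f x] routley_model_RTm_in_W[OF rm] by fastforce
  have "v \<in> W M" using routley_model_RTm_in_W[OF rm v(1)] .
  have "label_state M (f(j := v)) x = label_state M f x"
    using node_labels_subset_branch_labels[OF x] label_state_fun_upd_fresh[OF j] by simp
  then have "faithful M (f(j := v)) (B \<union> {RelTm x t (L j), SNeg \<phi> (L j)})"
    using v by (intro faithful_extend_fresh[OF f j \<open>v \<in> W M\<close>]) simp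
  then show ?thesis by blast
qed

lemma tab_rule_preserves_faithful:
  assumes "tab_rule B Es" and f: "faithful M f B" and M: "jrc_model M"
  shows "\<exists>E\<in>set Es. \<exists>g. faithful M g (B \<union> E)"
proof -
  have rm: "routley_model M" using M by (rule jrc_model_routley_model)
  have fW: "\<forall>i. f i \<in> W M" using f by (simp add: faithful_def)
  note holds = faithful_holds[OF f]
  note one = faithful_extend_one[OF f] and two = faithful_extend_two[OF f]
  from assms(1) show ?thesis
  proof cases
    case (T_neg \<phi> x)
    show ?thesis unfolding T_neg(1)
      by (rule one) (use holds[OF T_neg(2)] in \<open>simp add: label_state_bar[OF rm fW]\<close>)
  next
    case (F_neg \<phi> x)
    show ?thesis unfolding F_neg(1)
      by (rule one) (use holds[OF F_neg(2)] in \<open>simp add: label_state_bar[OF rm fW]\<close>)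
  next
    case (T_conj \<phi> \<psi> x)
    show ?thesis unfolding T_conj(1) by (rule one) (use holds[OF T_conj(2)] in simp)
  next
    case (F_conj \<phi> \<psi> x)
    show ?thesis unfolding F_conj(1) by (rule two) (use holds[OF F_conj(2)] in simp)
  next
    case (T_imp \<phi> \<psi> x y z)
    show ?thesis unfolding T_imp(1)
      by (rule two) (use holds[OF T_imp(2)] holds[OF T_imp(3)] in simp)
  next
    case (F_imp \<phi> \<psi> x j k)
    then show ?thesis using F_imp_sound[OF M f] by simp
  next
    case (T_cond \<phi> \<psi> x y)
    show ?thesis unfolding T_cond(1)
      by (rule one) (use holds[OF T_cond(2)] holds[OF T_cond(3)] in simp)
  next
    case (F_cond x \<phi> \<psi> j)
    then show ?thesis using F_cond_sound(1)[OF M f] by simp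
  next
    case (F_cond0 \<phi> \<psi> j)
    then show ?thesis using F_cond_sound(2)[OF M f] by simp
  next
    case (Cut_r \<phi> \<chi> x)
    have "sat M (label_state M f x) \<phi> \<Longrightarrow> RFm M \<phi> (label_state M f x) (label_state M f x)"
      using jrc_model_sat_RFm_refl[OF M faithful_label_state_in_W[OF rm f]] .
    then show ?thesis unfolding Cut_r(1) by (intro two) auto
  next
    case (T_just t \<phi> x y)
    show ?thesis unfolding T_just(1)
      by (rule one) (use holds[OF T_just(2)] holds[OF T_just(3)] in simp)
  next
    case (F_just t \<phi> x j)
    then show ?thesis using F_just_sound[OF M f] by simp
  next
    case (Rel_plus x s t y)
    have "RTm M (TPlus s t) (label_state M f x) (label_state M f y)"
      using holds[OF Rel_plus(2)] by simp
    then have "RTm M s (label_state M f x) (label_state M f y) \<and> RTm M t (label_state M f x) (label_state M f y)"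
      by (rule jrc_model_RTm_TPlus[OF M])
    then show ?thesis unfolding Rel_plus(1) by (intro one) simp
  next
    case (Normality x)
    have "f 0 \<in> WN M" using f by (simp add: faithful_def)
    then have "R M (f 0) (label_state M f x) (label_state M f x)"
      using routley_model_normal_R_iff[OF rm] faithful_label_state_in_W[OF rm f] by blast
    then show ?thesis unfolding Normality(1) by (intro one) simp
  qed
qed

lemma closed_branch_not_faithful: "closed_branch B \<Longrightarrow> \<not> faithful M f B"
  unfolding closed_branch_def by (metis faithful_holds holds.simps(1,2))

lemma closable_not_faithful: "closable B \<Longrightarrow> jrc_model M \<Longrightarrow> \<not> faithful M f B"
proof (induction B arbitrary: f rule: closable.induct)
  case (cl_closed B)
  then show ?case by (simp add: closed_branch_not_faithful)
next
  case (cl_rule B Es)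
  show ?case
  proof
    assume "faithful M f B"
    then obtain E g where "E \<in> set Es" "faithful M g (B \<union> E)"
      using tab_rule_preserves_faithful[OF cl_rule(1) _ cl_rule(3)] by blast
    then show False using cl_rule(2,3) by blast
  qed
qed

theorem mainTheorem17:
  fixes T :: "fm set" and \<phi> :: fm
  assumes "finite T"
    and "jrc_derivable T \<phi>"
  shows "jrc_entails TYPE('w) T \<phi>"
  unfolding jrc_entails_def
proof (intro allI impI ballI)
  fix M :: "'w rmodel" and w
  assume M: "jrc_model M" and w: "w \<in> WN M" and T: "\<forall>\<psi>\<in>T. sat M w \<psi>"
  let ?B = "(\<lambda>\<psi>. SPos \<psi> (L 0)) ` T \<union> {SNeg \<phi> (L 0)}"
  have "closable ?B" using assms(2) by (simp add: jrc_derivable_def)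
  then have "\<not> faithful M (\<lambda>_. w) ?B" using M by (rule closable_not_faithful)
  moreover have "w \<in> W M"
    using routley_model_normal_in_W[OF jrc_model_routley_model[OF M] w] .
  moreover have "L 0 \<in> branch_labels ?B"
    unfolding branch_labels_def by force
  moreover have "\<forall>n\<in>(\<lambda>\<psi>. SPos \<psi> (L 0)) ` T. holds M (\<lambda>_. w) n"
    using T by simp
  ultimately show "sat M w \<phi>"
    using w unfolding faithful_def by auto
qed

end
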